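(* Let $R$ be a unital associative ring and let $J=J_2\circ J_1$ act on $M_2(R)$. Then ${\rm dom}(J)={\rm dom}(J^{-1})=M_2^*(R)\cap M_2^\star(R)$, and $J$ maps ${\rm dom}(J)$ bijectively onto itself according to the formula $$J(A)=\begin{pmatrix} a-bd^{-1}c & b-ac^{-1}d\\ c-db^{-1}a & d-ca^{-1}b\end{pmatrix},\qquad A=\begin{pmatrix} a&b\\ c&d\end{pmatrix}\in M_2^\star(R)\cap M_2^*(R).$$ Furthermore, $J(A)\sim J^{-1}(A)$ for each $A\in{\rm dom}(J)$, and $A\in{\rm dom}(J)={\rm dom}(J^{-1})$ if and only if $a,b,c,d,db^{-1}-ca^{-1}\in R^*$.
   Context: $R^*$ denotes the units of $R$. $M_n^*(R)$ is the set of invertible $n\times n$ matrices over $R$, $M_n^\star(R)$ the set of $n\times n$ matrices with all entries in $R^*$. $J_1(M)=M^{-1}$ on $M_n^*(R)$; $J_2(M)_{jk}=(M_{kj})^{-1}$ on $M_n^\star(R)$. Compositions $g\circ f$ have domain $\{x\in{\rm dom}(f):f(x)\in{\rm dom}(g)\}$. $J^{-1}:=J_1\circ J_2$. For $A,B\in M_n(R)$, $A\sim B$ means $B=D_1^{-1}AD_2$ for some invertible diagonal matrices $D_1,D_2$. *)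

theory Defs
  imports "HOL-Analysis.Analysis"
begin

definition is_runit :: "'a::ring_1 \<Rightarrow> bool" where
  "is_runit x \<longleftrightarrow> (\<exists>y. x * y = 1 \<and> y * x = 1)"

definition rinv :: "'a::ring_1 \<Rightarrow> 'a" where
  "rinv x = (SOME y. x * y = 1 \<and> y * x = 1)"

text \<open>M_n^*(R): invertible matrices;  M_n^star(R): matrices all of whose entries are units.\<close>

definition inv_mats :: "('a::ring_1 ^ 'n ^ 'n) set" where
  "inv_mats = {M. invertible M}"

definition unit_mats :: "('a::ring_1 ^ 'n ^ 'n) set" where
  "unit_mats = {M. \<forall>j k. is_runit (M $ j $ k)}"

definition J1 :: "'a::ring_1 ^ 'n ^ 'n \<Rightarrow> 'a ^ 'n ^ 'n" where
  "J1 M = matrix_inv M"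

definition J2 :: "'a::ring_1 ^ 'n ^ 'n \<Rightarrow> 'a ^ 'n ^ 'n" where
  "J2 M = (\<chi> j k. rinv (M $ k $ j))"

definition dom_J :: "('a::ring_1 ^ 'n ^ 'n) set" where
  "dom_J = {M \<in> inv_mats. J1 M \<in> unit_mats}"

definition J :: "'a::ring_1 ^ 'n ^ 'n \<Rightarrow> 'a ^ 'n ^ 'n" where
  "J M = J2 (J1 M)"

definition dom_Jinv :: "('a::ring_1 ^ 'n ^ 'n) set" where
  "dom_Jinv = {M \<in> unit_mats. J2 M \<in> inv_mats}"

definition Jinv :: "'a::ring_1 ^ 'n ^ 'n \<Rightarrow> 'a ^ 'n ^ 'n" where
  "Jinv M = J1 (J2 M)"

definition diagonal_mat :: "'a::ring_1 ^ 'n ^ 'n \<Rightarrow> bool" where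
  "diagonal_mat D \<longleftrightarrow> (\<forall>i j. i \<noteq> j \<longrightarrow> D $ i $ j = 0)"

definition diag_equiv :: "'a::ring_1 ^ 'n ^ 'n \<Rightarrow> 'a ^ 'n ^ 'n \<Rightarrow> bool" where
  "diag_equiv A B \<longleftrightarrow> (\<exists>D1 D2. diagonal_mat D1 \<and> diagonal_mat D2 \<and> invertible D1 \<and> invertible D2
       \<and> B = matrix_inv D1 ** A ** D2)"

end

theory Submission
  imports Defs
begin

text \<open>
  If A = [[a, b], [c, d]] is invertible and all its entries are units, four applications of the
  Schur complement formula show that the entries of A^-1 are the inverses of the quasideterminants
  a - b d^-1 c, b - a c^-1 d, c - d b^-1 a, d - c a^-1 b, in transposed position; hence J(A) is the
  matrix of quasideterminants. For units a, b, c, d every quasideterminant of A and of J_2(A) is,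
  up to unit factors on both sides, Q = d b^-1 - c a^-1. So invertibility of A, and of J_2(A), is
  equivalent to Q being a unit, which identifies both domains; comparing the Q-expressions
  entrywise yields the diagonal scalings witnessing J(A) ~ J^-1(A).
\<close>

lemma mult_cancel_left_inverse: "a * b = 1 \<Longrightarrow> a * (b * c) = (c::'a::monoid_mult)"
  by (simp flip: mult.assoc)

lemma is_runitI: "x * y = 1 \<Longrightarrow> y * x = 1 \<Longrightarrow> is_runit x"
  unfolding is_runit_def by blast

lemma runit_rinv_inverse:
  assumes "is_runit x" shows "x * rinv x = 1" "rinv x * x = 1"
  using someI_ex[OF assms[unfolded is_runit_def]] unfolding rinv_def by blast+

lemma rinv_unique:
  fixes x y :: "'a::ring_1"
  assumes "x * y = 1" "y * x = 1" shows "rinv x = y"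
proof -
  have "rinv x = (y * x) * rinv x" using assms by simp
  also have "\<dots> = y"
    using runit_rinv_inverse(1)[OF is_runitI[OF assms]] by (simp add: mult.assoc)
  finally show ?thesis .
qed

lemma is_runit_rinv: "is_runit x \<Longrightarrow> is_runit (rinv x)"
  using runit_rinv_inverse is_runitI by metis

lemma rinv_rinv: "is_runit x \<Longrightarrow> rinv (rinv x) = x"
  using runit_rinv_inverse rinv_unique by metis

lemma is_runit_1: "is_runit 1"
  by (rule is_runitI[of 1 1]) simp_all

lemma is_runit_mult:
  fixes x y :: "'a::ring_1"
  assumes "is_runit x" "is_runit y" shows "is_runit (x * y)" "rinv (x * y) = rinv y * rinv x"
proof -
  have "x * y * (rinv y * rinv x) = 1" "rinv y * rinv x * (x * y) = 1"
    using runit_rinv_inverse[OF assms(1)] runit_rinv_inverse[OF assms(2)]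
    by (simp_all add: mult.assoc mult_cancel_left_inverse)
  then show "is_runit (x * y)" "rinv (x * y) = rinv y * rinv x"
    using is_runitI rinv_unique by blast+
qed

lemma is_runit_uminus:
  fixes x :: "'a::ring_1"
  assumes "is_runit x" shows "is_runit (- x)" "rinv (- x) = - rinv x"
proof -
  have "- x * - rinv x = 1" "- rinv x * - x = 1" using runit_rinv_inverse[OF assms] by simp_all
  then show "is_runit (- x)" "rinv (- x) = - rinv x" using is_runitI rinv_unique by blast+
qed

lemma is_runit_uminus_iff: "is_runit (- x) \<longleftrightarrow> is_runit (x::'a::ring_1)"
  using is_runit_uminus[of x] is_runit_uminus[of "- x"] by auto

lemma is_runit_sandwich_iff:
  fixes u v w :: "'a::ring_1"
  assumes "is_runit u" "is_runit v" shows "is_runit (u * w * v) \<longleftrightarrow> is_runit w"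
proof
  assume "is_runit (u * w * v)"
  moreover have "w = rinv u * (u * w * v) * rinv v"
    using runit_rinv_inverse[OF assms(1)] runit_rinv_inverse[OF assms(2)]
    by (simp add: mult.assoc mult_cancel_left_inverse)
  ultimately show "is_runit w" using assms by (metis is_runit_mult(1) is_runit_rinv)
qed (use assms is_runit_mult(1) in metis)

lemma is_runit_mult_left_iff:
  fixes u w :: "'a::ring_1"
  shows "is_runit u \<Longrightarrow> is_runit (u * w) \<longleftrightarrow> is_runit w"
  using is_runit_sandwich_iff[of u 1 w] is_runit_1 by simp

lemma matrix_inv_unique:
  fixes A B :: "'a::semiring_1^'n^'n"
  assumes "A ** B = mat 1" "B ** A = mat 1"
  shows "invertible A" "matrix_inv A = B"
proof -
  show inv: "invertible A" using assms invertible_def by blast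
  have "A ** matrix_inv A = mat 1"
    using someI_ex[OF inv[unfolded invertible_def]] unfolding matrix_inv_def by blast
  then have "matrix_inv A = (B ** A) ** matrix_inv A" using assms by simp
  also have "\<dots> = B"
    using \<open>A ** matrix_inv A = mat 1\<close> by (simp flip: matrix_mul_assoc)
  finally show "matrix_inv A = B" .
qed

lemma invertible_matrix_inv:
  fixes A :: "'a::semiring_1^'n^'n"
  assumes "invertible A"
  shows "A ** matrix_inv A = mat 1" "matrix_inv A ** A = mat 1"
    "invertible (matrix_inv A)" "matrix_inv (matrix_inv A) = A"
proof -
  show *: "A ** matrix_inv A = mat 1" "matrix_inv A ** A = mat 1"
    using someI_ex[OF assms[unfolded invertible_def]] unfolding matrix_inv_def by blast+
  show "invertible (matrix_inv A)" "matrix_inv (matrix_inv A) = A"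
    using matrix_inv_unique[OF *(2,1)] by blast+
qed

definition mat2 :: "'a::zero \<Rightarrow> 'a \<Rightarrow> 'a \<Rightarrow> 'a \<Rightarrow> 'a^2^2" where
  "mat2 a b c d = vector [vector [a, b], vector [c, d]]"

lemma mat2_nth [simp]:
  "mat2 a b c d $ 1 $ 1 = a" "mat2 a b c d $ 1 $ 2 = b"
  "mat2 a b c d $ 2 $ 1 = c" "mat2 a b c d $ 2 $ 2 = d"
  by (simp_all add: mat2_def)

lemma mat2_eta: "M = mat2 (M$1$1) (M$1$2) (M$2$1) (M$2$2)"
  by (simp add: vec_eq_iff forall_2)

lemma mat2_eq_iff:
  "mat2 a b c d = mat2 a' b' c' d' \<longleftrightarrow> a = a' \<and> b = b' \<and> c = c' \<and> d = d'"
  by (auto simp: vec_eq_iff forall_2)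

lemma mat2_mult:
  "mat2 a b c d ** mat2 e f g h =
     mat2 (a * e + b * g) (a * f + b * h) (c * e + d * g) (c * f + d * h)"
  by (simp add: vec_eq_iff forall_2 matrix_matrix_mult_def sum_2)

lemma mat_1_eq_mat2: "(mat 1 :: 'a::semiring_1^2^2) = mat2 1 0 0 1"
  by (simp add: vec_eq_iff forall_2 mat_def)

lemma mat2_inverse_iff:
  "mat2 a b c d ** mat2 e f g h = mat 1 \<longleftrightarrow>
     a * e + b * g = 1 \<and> a * f + b * h = 0 \<and>
     c * e + d * g = 0 \<and> c * f + d * h = (1::'a::semiring_1)"
  by (simp add: mat2_mult mat_1_eq_mat2 mat2_eq_iff)

lemma mat2_in_unit_mats_iff:
  "mat2 a b c d \<in> unit_mats \<longleftrightarrow> is_runit a \<and> is_runit b \<and> is_runit c \<and> is_runit d"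
  by (simp add: unit_mats_def forall_2)

lemma J2_mat2: "J2 (mat2 a b c d) = mat2 (rinv a) (rinv c) (rinv b) (rinv d)"
  by (simp add: vec_eq_iff forall_2 J2_def)

lemma J2_unit_mats:
  assumes "M \<in> unit_mats" shows "J2 M \<in> unit_mats" "J2 (J2 M) = M"
  using assms by (simp_all add: unit_mats_def J2_def vec_eq_iff is_runit_rinv rinv_rinv)

lemma diag_equiv_mat2I:
  fixes u1 u2 v1 v2 :: "'a::ring_1"
  assumes "is_runit u1" "is_runit u2" "is_runit v1" "is_runit v2"
  shows "diag_equiv (mat2 a b c d)
    (mat2 (u1 * a * v1) (u1 * b * v2) (u2 * c * v1) (u2 * d * v2))"
proof -
  let ?D1 = "mat2 (rinv u1) 0 0 (rinv u2)" and ?D2 = "mat2 v1 0 0 v2"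
  have "?D1 ** mat2 u1 0 0 u2 = mat 1" "mat2 u1 0 0 u2 ** ?D1 = mat 1"
    "?D2 ** mat2 (rinv v1) 0 0 (rinv v2) = mat 1" "mat2 (rinv v1) 0 0 (rinv v2) ** ?D2 = mat 1"
    using assms by (simp_all add: mat2_inverse_iff runit_rinv_inverse)
  then have "invertible ?D1" "invertible ?D2" "matrix_inv ?D1 = mat2 u1 0 0 u2"
    using matrix_inv_unique by blast+
  moreover have "diagonal_mat (mat2 x 0 0 y)" for x y :: 'a
    by (simp add: diagonal_mat_def forall_2)
  ultimately show ?thesis
    unfolding diag_equiv_def by (force simp: mat2_mult)
qed

lemma schur_complement_rinv:
  fixes a b c d x y z :: "'a::ring_1"
  assumes "a * x + b * z = 1" "c * x + d * z = 0" "x * a + y * c = 1" "x * b + y * d = 0"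
    and "is_runit d"
  shows "is_runit (a - b * rinv d * c)" "rinv (a - b * rinv d * c) = x"
proof -
  note d = runit_rinv_inverse[OF \<open>is_runit d\<close>]
  have "z = rinv d * (d * z)" using d by (simp add: mult_cancel_left_inverse)
  also have "d * z = - (c * x)" using assms(2) by (simp add: eq_neg_iff_add_eq_0 add.commute)
  finally have z: "z = - (rinv d * c * x)" by (simp add: mult.assoc)
  have "y = (y * d) * rinv d" using d by (simp add: mult.assoc)
  also have "y * d = - (x * b)" using assms(4) by (simp add: eq_neg_iff_add_eq_0 add.commute)
  finally have y: "y = - (x * b * rinv d)" by simp
  have "(a - b * rinv d * c) * x = 1" "x * (a - b * rinv d * c) = 1"
    using assms(1,3) y z by (simp_all add: algebra_simps)
  then show "is_runit (a - b * rinv d * c)" "rinv (a - b * rinv d * c) = x"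
    using is_runitI rinv_unique by blast+
qed

lemma invertible_mat2_iff_schur_complement:
  fixes a b c d :: "'a::ring_1"
  assumes "is_runit d"
  shows "invertible (mat2 a b c d) \<longleftrightarrow> is_runit (a - b * rinv d * c)"
proof
  assume "invertible (mat2 a b c d)"
  then obtain x y z w
    where "mat2 a b c d ** mat2 x y z w = mat 1" "mat2 x y z w ** mat2 a b c d = mat 1"
    unfolding invertible_def by (metis mat2_eta)
  then show "is_runit (a - b * rinv d * c)"
    using schur_complement_rinv(1)[OF _ _ _ _ assms] by (simp add: mat2_inverse_iff) blast
next
  define m where "m = a - b * rinv d * c"
  assume "is_runit (a - b * rinv d * c)"
  then have m: "m * rinv m = 1" "rinv m * m = 1" and a: "a = m + b * rinv d * c"
    using runit_rinv_inverse unfolding m_def by auto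
  note d = runit_rinv_inverse[OF assms]
  let ?N = "mat2 (rinv m) (- (rinv m * b * rinv d)) (- (rinv d * c * rinv m))
    (rinv d + rinv d * c * rinv m * b * rinv d)"
  have "mat2 a b c d ** ?N = mat 1" "?N ** mat2 a b c d = mat 1"
    unfolding mat2_inverse_iff a using m d
    by (simp_all add: algebra_simps mult_cancel_left_inverse)
  then show "invertible (mat2 a b c d)" using matrix_inv_unique(1) by blast
qed

definition quasidets :: "'a::ring_1^2^2 \<Rightarrow> 'a^2^2" where
  "quasidets A = (let a = A$1$1; b = A$1$2; c = A$2$1; d = A$2$2 in
     mat2 (a - b * rinv d * c) (b - a * rinv c * d) (c - d * rinv b * a) (d - c * rinv a * b))"

lemma quasidets_mat2:
  "quasidets (mat2 a b c d) =
     mat2 (a - b * rinv d * c) (b - a * rinv c * d) (c - d * rinv b * a) (d - c * rinv a * b)"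
  by (simp add: quasidets_def)

lemma matrix_inv_eq_J2_quasidets:
  fixes A :: "'a::ring_1^2^2"
  assumes "invertible A" "A \<in> unit_mats"
  shows "quasidets A \<in> unit_mats" "matrix_inv A = J2 (quasidets A)"
proof -
  obtain a b c d where A: "A = mat2 a b c d" by (metis mat2_eta)
  obtain x y z w where N: "matrix_inv A = mat2 x y z w" by (metis mat2_eta)
  have u: "is_runit a" "is_runit b" "is_runit c" "is_runit d"
    using assms(2) by (simp_all add: A mat2_in_unit_mats_iff)
  have "a * x + b * z = 1" "a * y + b * w = 0" "c * x + d * z = 0" "c * y + d * w = 1"
    "x * a + y * c = 1" "x * b + y * d = 0" "z * a + w * c = 0" "z * b + w * d = 1"
    using invertible_matrix_inv(1,2)[OF assms(1)] unfolding N by (simp_all add: A mat2_inverse_iff)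
  \<comment> \<open>each quasideterminant is the Schur complement of A with rows and/or columns swapped\<close>
  then have "is_runit (a - b * rinv d * c) \<and> rinv (a - b * rinv d * c) = x"
    "is_runit (b - a * rinv c * d) \<and> rinv (b - a * rinv c * d) = z"
    "is_runit (c - d * rinv b * a) \<and> rinv (c - d * rinv b * a) = y"
    "is_runit (d - c * rinv a * b) \<and> rinv (d - c * rinv a * b) = w"
    using schur_complement_rinv[of a x b z c d y] schur_complement_rinv[of b z a x d c w]
      schur_complement_rinv[of c y d w a b x] schur_complement_rinv[of d w c y b a z] u
    by (simp_all add: add.commute)
  then show "quasidets A \<in> unit_mats" "matrix_inv A = J2 (quasidets A)"
    unfolding N by (simp_all add: A quasidets_mat2 mat2_in_unit_mats_iff J2_mat2)
qed

context
  fixes a b c d :: "'a::ring_1"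
  assumes units: "is_runit a" "is_runit b" "is_runit c" "is_runit d"
begin

private lemmas inverses = runit_rinv_inverse[OF units(1)] runit_rinv_inverse[OF units(2)]
  runit_rinv_inverse[OF units(3)] runit_rinv_inverse[OF units(4)]

lemma quasidets_mat2_units:
  "quasidets (mat2 a b c d) =
     (let Q = d * rinv b - c * rinv a in
      mat2 (b * rinv d * Q * a) (- (a * rinv c * Q * b)) (- (Q * a)) (Q * b))"
  using inverses by (simp add: quasidets_mat2 algebra_simps mult_cancel_left_inverse)

lemma quasidets_J2_mat2_units:
  "quasidets (J2 (mat2 a b c d)) =
     (let Q = d * rinv b - c * rinv a in
      mat2 (- (rinv c * Q)) (rinv a * b * rinv d * Q * a * rinv c) (rinv d * Q)
        (- (rinv d * Q * a * rinv c)))"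
  using inverses units
  by (simp add: J2_mat2 quasidets_mat2 rinv_rinv algebra_simps mult_cancel_left_inverse)

lemma invertible_mat2_units_iff:
  "invertible (mat2 a b c d) \<longleftrightarrow> is_runit (d * rinv b - c * rinv a)"
proof -
  have "a - b * rinv d * c = (b * rinv d) * (d * rinv b - c * rinv a) * a"
    using inverses by (simp add: algebra_simps mult_cancel_left_inverse)
  then show ?thesis
    using invertible_mat2_iff_schur_complement[OF units(4)] is_runit_sandwich_iff
      is_runit_mult(1) is_runit_rinv units by metis
qed

lemma invertible_J2_mat2_units_iff:
  "invertible (J2 (mat2 a b c d)) \<longleftrightarrow> is_runit (d * rinv b - c * rinv a)"
proof -
  have "rinv a - rinv c * rinv (rinv d) * rinv b = - (rinv c * (d * rinv b - c * rinv a))"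
    using inverses units by (simp add: rinv_rinv algebra_simps mult_cancel_left_inverse)
  then show ?thesis
    using invertible_mat2_iff_schur_complement[OF is_runit_rinv[OF units(4)]]
      is_runit_mult_left_iff is_runit_rinv is_runit_uminus_iff units
    by (metis J2_mat2)
qed

lemma diag_equiv_quasidets_J2_units:
  assumes "is_runit (d * rinv b - c * rinv a)"
  shows "diag_equiv (quasidets (mat2 a b c d)) (J2 (quasidets (J2 (mat2 a b c d))))"
proof -
  define Q where "Q = d * rinv b - c * rinv a"
  have Q: "is_runit Q" "Q * rinv Q = 1" "rinv Q * Q = 1"
    using assms runit_rinv_inverse unfolding Q_def by auto
  define u1 where "u1 = rinv Q * d * rinv b"
  define u2 where "u2 = c * rinv a * rinv Q * d * rinv b * a * rinv c"
  define v1 where "v1 = - (rinv a * rinv Q * c)"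
  define v2 where "v2 = - (rinv b * rinv Q * c * rinv a * b)"
  have units_uv: "is_runit u1" "is_runit u2" "is_runit v1" "is_runit v2"
    unfolding u1_def u2_def v1_def v2_def using Q units
    by (simp_all add: is_runit_mult is_runit_rinv is_runit_uminus)
  have "J2 (quasidets (J2 (mat2 a b c d))) =
      mat2 (u1 * (b * rinv d * Q * a) * v1) (u1 * (- (a * rinv c * Q * b)) * v2)
        (u2 * (- (Q * a)) * v1) (u2 * (Q * b) * v2)"
    unfolding quasidets_J2_mat2_units Let_def Q_def[symmetric]
    unfolding J2_mat2 u1_def u2_def v1_def v2_def
    using inverses units Q
    by (simp add: mat2_eq_iff is_runit_mult is_runit_rinv is_runit_uminus rinv_rinv
        mult.assoc mult_cancel_left_inverse)
  then show ?thesis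
    unfolding quasidets_mat2_units Let_def Q_def[symmetric]
    by (simp only:) (rule diag_equiv_mat2I[OF units_uv])
qed

end

lemma mat2_units_cases:
  fixes M :: "'a::ring_1^2^2"
  assumes "M \<in> unit_mats"
  obtains a b c d where "M = mat2 a b c d" "is_runit a" "is_runit b" "is_runit c" "is_runit d"
  using assms mat2_eta[of M] mat2_in_unit_mats_iff by metis

lemma invertible_J2_iff:
  fixes M :: "'a::ring_1^2^2"
  assumes "M \<in> unit_mats"
  shows "invertible (J2 M) \<longleftrightarrow> invertible M"
  using assms
  by (cases rule: mat2_units_cases)
    (simp add: invertible_mat2_units_iff invertible_J2_mat2_units_iff)

lemma J1_inv_unit_mats:
  fixes M :: "'a::ring_1^2^2"
  assumes "M \<in> inv_mats" "M \<in> unit_mats"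
  shows "J1 M \<in> inv_mats" "J1 M \<in> unit_mats" "J1 (J1 M) = M"
proof -
  have "invertible M" using assms(1) unfolding inv_mats_def by simp
  then show "J1 M \<in> inv_mats" "J1 (J1 M) = M"
    using invertible_matrix_inv(3,4) unfolding J1_def inv_mats_def by auto
  show "J1 M \<in> unit_mats"
    using matrix_inv_eq_J2_quasidets[OF \<open>invertible M\<close> assms(2)] J2_unit_mats(1)
    unfolding J1_def by metis
qed

lemma J2_inv_unit_mats:
  fixes M :: "'a::ring_1^2^2"
  assumes "M \<in> inv_mats" "M \<in> unit_mats"
  shows "J2 M \<in> inv_mats" "J2 M \<in> unit_mats" "J2 (J2 M) = M"
  using assms invertible_J2_iff J2_unit_mats unfolding inv_mats_def by auto

lemma dom_J_eq: "(dom_J :: ('a::ring_1^2^2) set) = inv_mats \<inter> unit_mats"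
proof (intro set_eqI iffI)
  fix M :: "'a^2^2"
  assume "M \<in> dom_J"
  then have "J1 M \<in> inv_mats" "J1 M \<in> unit_mats" "J1 (J1 M) = M"
    using invertible_matrix_inv(3,4) unfolding dom_J_def J1_def inv_mats_def by auto
  then show "M \<in> inv_mats \<inter> unit_mats" using J1_inv_unit_mats(1,2) by (metis IntI)
qed (use J1_inv_unit_mats(2) dom_J_def in blast)

lemma dom_Jinv_eq: "(dom_Jinv :: ('a::ring_1^2^2) set) = inv_mats \<inter> unit_mats"
  using invertible_J2_iff unfolding dom_Jinv_def inv_mats_def by blast

lemma J_eq_quasidets:
  fixes M :: "'a::ring_1^2^2"
  assumes "M \<in> inv_mats \<inter> unit_mats"
  shows "J M = quasidets M"
  using assms unfolding inv_mats_def
  by (simp add: J_def J1_def matrix_inv_eq_J2_quasidets J2_unit_mats(2))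

lemma bij_betw_J:
  "bij_betw J (inv_mats \<inter> unit_mats :: ('a::ring_1^2^2) set) (inv_mats \<inter> unit_mats)"
  by (rule bij_betw_byWitness[where f' = Jinv])
    (auto simp: J_def Jinv_def J1_inv_unit_mats J2_inv_unit_mats)

lemma diag_equiv_J_Jinv:
  fixes M :: "'a::ring_1^2^2"
  assumes "M \<in> inv_mats \<inter> unit_mats"
  shows "diag_equiv (J M) (Jinv M)"
proof -
  have "Jinv M = J2 (quasidets (J2 M))"
    using assms matrix_inv_eq_J2_quasidets J2_inv_unit_mats(1,2)
    unfolding Jinv_def J1_def inv_mats_def by auto
  moreover obtain a b c d where M: "M = mat2 a b c d"
    and units: "is_runit a" "is_runit b" "is_runit c" "is_runit d"
    using assms by (blast elim: mat2_units_cases)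
  moreover have "is_runit (d * rinv b - c * rinv a)"
    using assms invertible_mat2_units_iff[OF units] unfolding M inv_mats_def by simp
  ultimately show ?thesis
    using J_eq_quasidets[OF assms] diag_equiv_quasidets_J2_units[OF units] by simp
qed

lemma mem_dom_J_iff:
  fixes A :: "'a::ring_1^2^2"
  shows "A \<in> dom_J \<longleftrightarrow>
    (let a = A$1$1; b = A$1$2; c = A$2$1; d = A$2$2 in
     is_runit a \<and> is_runit b \<and> is_runit c \<and> is_runit d \<and> is_runit (d * rinv b - c * rinv a))"
  using invertible_mat2_units_iff mat2_eta[of A] mat2_in_unit_mats_iff
  unfolding dom_J_eq inv_mats_def Let_def by (metis IntI IntD1 IntD2 mem_Collect_eq)

theorem proposition2:
  fixes A :: "'a::ring_1 ^ 2 ^ 2"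
  shows "dom_J = (dom_Jinv :: ('a ^ 2 ^ 2) set)
    \<and> (dom_J :: ('a ^ 2 ^ 2) set) = inv_mats \<inter> unit_mats
    \<and> bij_betw J (dom_J :: ('a ^ 2 ^ 2) set) dom_J
    \<and> (\<forall>M \<in> (dom_J :: ('a ^ 2 ^ 2) set).
          J M = (let a = M$1$1; b = M$1$2; c = M$2$1; d = M$2$2 in
                 vector [vector [a - b * rinv d * c, b - a * rinv c * d],
                         vector [c - d * rinv b * a, d - c * rinv a * b]]))
    \<and> (\<forall>M \<in> (dom_J :: ('a ^ 2 ^ 2) set). diag_equiv (J M) (Jinv M))
    \<and> (A \<in> dom_J \<longleftrightarrow>
         (let a = A$1$1; b = A$1$2; c = A$2$1; d = A$2$2 in
          is_runit a \<and> is_runit b \<and> is_runit c \<and> is_runit d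
          \<and> is_runit (d * rinv b - c * rinv a)))"
  unfolding mat2_def[symmetric] quasidets_def[symmetric] mem_dom_J_iff[symmetric]
  unfolding dom_J_eq dom_Jinv_eq
  using bij_betw_J J_eq_quasidets diag_equiv_J_Jinv by blast

end
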